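(* Let $(X,\Gamma)$ be a $(\mu,\nu)$-path system space. For every $\delta\ge0$ and $\eta\ge0$ there exist $\theta\ge0$ and a function $\zeta\colon\mathbb R_{\ge0}\times\mathbb R_{\ge0}\to\mathbb R_{\ge0}$ with the following property. Let $\pi_A\colon X\to A$ be a $\delta$-constricting map and let $Y\subseteq X$ be $\eta$-quasi-convex. Then for all $\varepsilon_1,\varepsilon_2\ge0$, $$\operatorname{diam}_A(Y)\le \operatorname{diam}(A^{+\theta+\varepsilon_1}\cap Y^{+\varepsilon_2})+\zeta(\varepsilon_1,\varepsilon_2)\quad\text{and}\quad \operatorname{diam}(A^{+\theta+\varepsilon_1}\cap Y^{+\varepsilon_2})\le\operatorname{diam}_A(Y)+\zeta(\varepsilon_1,\varepsilon_2).$$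
   Context: A path is a rectifiable continuous map $\alpha\colon[a,b]\to X$ parametrised by arc length; it is a $(\kappa,\lambda)$-quasi-geodesic if $d(\alpha(t),\alpha(t'))\le|t-t'|\le\kappa d(\alpha(t),\alpha(t'))+\lambda$. A $(\mu,\nu)$-path system space $(X,\Gamma)$ is a geodesic metric space $X$ with a collection $\Gamma$ of paths closed under subpaths, such that any two points are joined by an element of $\Gamma$ and every element is a $(\mu,\nu)$-quasi-geodesic. $Y^{+\eta}=\{x\in X: d(x,Y)\le\eta\}$. A subset $Y$ is $\eta$-quasi-convex if every $\gamma\in\Gamma$ with endpoints in $Y$ lies in $Y^{+\eta}$. A map $\pi_A\colon X\to A$ onto a subset $A$ is $\delta$-constricting if (CS1) $d(x,\pi_A(x))\le\delta$ for $x\in A$, and (CS2) for all $x,y\in X$ and $\gamma\in\Gamma$ joining $x$ to $y$, if $d(\pi_A(x),\pi_A(y))>\delta$ then $\gamma$ meets $B_X(\pi_A(x),\delta)$ and $B_X(\pi_A(y),\delta)$. $\operatorname{diam}_A(Y)=\operatorname{diam}(\pi_A(Y))$; the diameter of the empty set is $0$. *)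

theory Defs
  imports "HOL-Analysis.Analysis"
begin

text \<open>A path is represented as a triple (a, b, alpha) with a \<le> b; only the values of
  alpha on [a,b] matter. The metric space is an abstract one, (M, d) with Metric_space M d.\<close>

type_synonym 'a rpath = "real \<times> real \<times> (real \<Rightarrow> 'a)"

definition plen :: "('a \<Rightarrow> 'a \<Rightarrow> real) \<Rightarrow> (real \<Rightarrow> 'a) \<Rightarrow> real \<Rightarrow> real \<Rightarrow> ereal" where
  "plen d \<alpha> s t = Sup {ereal (\<Sum>i<n. d (\<alpha> (p i)) (\<alpha> (p (Suc i)))) | n p.
      p 0 = s \<and> p n = t \<and> (\<forall>i<n. p i \<le> p (Suc i))}"

definition is_path :: "'a set \<Rightarrow> ('a \<Rightarrow> 'a \<Rightarrow> real) \<Rightarrow> 'a rpath \<Rightarrow> bool" where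
  "is_path M d \<gamma> = (case \<gamma> of (a, b, \<alpha>) \<Rightarrow>
      a \<le> b \<and> \<alpha> ` {a..b} \<subseteq> M
      \<and> (\<forall>t\<in>{a..b}. \<forall>e>0. \<exists>r>0. \<forall>s\<in>{a..b}. \<bar>s - t\<bar> < r \<longrightarrow> d (\<alpha> s) (\<alpha> t) < e)
      \<and> plen d \<alpha> a b < \<infinity>
      \<and> (\<forall>s t. a \<le> s \<and> s \<le> t \<and> t \<le> b \<longrightarrow> plen d \<alpha> s t = ereal (t - s)))"

definition quasi_geodesic :: "('a \<Rightarrow> 'a \<Rightarrow> real) \<Rightarrow> real \<Rightarrow> real \<Rightarrow> 'a rpath \<Rightarrow> bool" where
  "quasi_geodesic d \<kappa> lam \<gamma> = (case \<gamma> of (a, b, \<alpha>) \<Rightarrow>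
      (\<forall>t\<in>{a..b}. \<forall>t'\<in>{a..b}. d (\<alpha> t) (\<alpha> t') \<le> \<bar>t - t'\<bar>
         \<and> \<bar>t - t'\<bar> \<le> \<kappa> * d (\<alpha> t) (\<alpha> t') + lam))"

definition joins :: "'a rpath \<Rightarrow> 'a \<Rightarrow> 'a \<Rightarrow> bool" where
  "joins \<gamma> x y = (case \<gamma> of (a, b, \<alpha>) \<Rightarrow> \<alpha> a = x \<and> \<alpha> b = y)"

definition geodesic_space :: "'a set \<Rightarrow> ('a \<Rightarrow> 'a \<Rightarrow> real) \<Rightarrow> bool" where
  "geodesic_space M d = (Metric_space M d \<and> (\<forall>x\<in>M. \<forall>y\<in>M. \<exists>g.
      g 0 = x \<and> g (d x y) = y \<and> g ` {0..d x y} \<subseteq> M \<and>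
      (\<forall>s\<in>{0..d x y}. \<forall>t\<in>{0..d x y}. d (g s) (g t) = \<bar>s - t\<bar>)))"

definition path_system_space ::
  "'a set \<Rightarrow> ('a \<Rightarrow> 'a \<Rightarrow> real) \<Rightarrow> 'a rpath set \<Rightarrow> real \<Rightarrow> real \<Rightarrow> bool" where
  "path_system_space M d \<Gamma> \<mu> \<nu> = (geodesic_space M d
     \<and> (\<forall>\<gamma>\<in>\<Gamma>. is_path M d \<gamma> \<and> quasi_geodesic d \<mu> \<nu> \<gamma>)
     \<and> (\<forall>a b \<alpha> s t. (a, b, \<alpha>) \<in> \<Gamma> \<and> a \<le> s \<and> s \<le> t \<and> t \<le> b \<longrightarrow>
          (\<exists>\<beta>. (s, t, \<beta>) \<in> \<Gamma> \<and> (\<forall>r\<in>{s..t}. \<beta> r = \<alpha> r)))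
     \<and> (\<forall>x\<in>M. \<forall>y\<in>M. \<exists>\<gamma>\<in>\<Gamma>. joins \<gamma> x y))"

text \<open>Closed neighbourhood Y^{+eta} = {x \<in> X. d(x,Y) \<le> eta}; empty if Y is empty.\<close>
definition nbhd :: "'a set \<Rightarrow> ('a \<Rightarrow> 'a \<Rightarrow> real) \<Rightarrow> 'a set \<Rightarrow> real \<Rightarrow> 'a set" where
  "nbhd M d Y \<eta> = {x \<in> M. Y \<noteq> {} \<and> Inf (d x ` Y) \<le> \<eta>}"

definition quasi_convex :: "'a set \<Rightarrow> ('a \<Rightarrow> 'a \<Rightarrow> real) \<Rightarrow> 'a rpath set \<Rightarrow> real \<Rightarrow> 'a set \<Rightarrow> bool" where
  "quasi_convex M d \<Gamma> \<eta> Y = (Y \<subseteq> M \<and> (\<forall>\<gamma>\<in>\<Gamma>. \<forall>x\<in>Y. \<forall>y\<in>Y. joins \<gamma> x y \<longrightarrow>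
       (case \<gamma> of (a, b, \<alpha>) \<Rightarrow> \<alpha> ` {a..b} \<subseteq> nbhd M d Y \<eta>)))"

definition meets_ball :: "('a \<Rightarrow> 'a \<Rightarrow> real) \<Rightarrow> 'a rpath \<Rightarrow> 'a \<Rightarrow> real \<Rightarrow> bool" where
  "meets_ball d \<gamma> p r = (case \<gamma> of (a, b, \<alpha>) \<Rightarrow> (\<exists>t\<in>{a..b}. d (\<alpha> t) p \<le> r))"

definition constricting ::
  "'a set \<Rightarrow> ('a \<Rightarrow> 'a \<Rightarrow> real) \<Rightarrow> 'a rpath set \<Rightarrow> real \<Rightarrow> 'a set \<Rightarrow> ('a \<Rightarrow> 'a) \<Rightarrow> bool" where
  "constricting M d \<Gamma> \<delta> A \<pi> = (A \<subseteq> M \<and> \<pi> ` M = A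
     \<and> (\<forall>x\<in>A. d x (\<pi> x) \<le> \<delta>)
     \<and> (\<forall>x\<in>M. \<forall>y\<in>M. \<forall>\<gamma>\<in>\<Gamma>. joins \<gamma> x y \<and> d (\<pi> x) (\<pi> y) > \<delta> \<longrightarrow>
          meets_ball d \<gamma> (\<pi> x) \<delta> \<and> meets_ball d \<gamma> (\<pi> y) \<delta>))"

text \<open>Diameter, valued in extended reals (infinite for unbounded sets); diam {} = 0.\<close>
definition mdiam :: "('a \<Rightarrow> 'a \<Rightarrow> real) \<Rightarrow> 'a set \<Rightarrow> ereal" where
  "mdiam d S = (if S = {} then 0 else (SUP p\<in>S \<times> S. ereal (d (fst p) (snd p))))"

end

theory Submission
  imports Defs
begin

text \<open>Take \<theta> = \<delta> + \<eta> + 1. If the projections of x, y \<in> Y are more than \<delta> apart, a path of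
  \<Gamma> from x to y passes within \<delta> of \<pi> x and of \<pi> y; by quasi-convexity that path stays near Y,
  so \<pi> x and \<pi> y are within \<theta> of points of Y lying in both neighbourhoods. Conversely, a point
  of the intersection of the neighbourhoods of A and Y is close to some w \<in> Y which is close to
  A; a path from w to a point of A near w either passes within \<delta> of \<pi> w or has endpoints with
  projections at most \<delta> apart, so d(w, \<pi> w) is bounded linearly in d(w, A). Both inequalities
  then follow from the triangle inequality.\<close>

lemma mdiam_ge_dist: "x \<in> S \<Longrightarrow> y \<in> S \<Longrightarrow> ereal (d x y) \<le> mdiam d S"
  unfolding mdiam_def by (auto intro!: SUP_upper2[where i = "(x, y)"])

lemma mdiam_le: "(\<And>x y. x \<in> S \<Longrightarrow> y \<in> S \<Longrightarrow> ereal (d x y) \<le> B) \<Longrightarrow> 0 \<le> B \<Longrightarrow> mdiam d S \<le> B"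
  unfolding mdiam_def by (auto intro!: SUP_least)

context Metric_space
begin

lemma mdiam_nonneg: "0 \<le> mdiam d S"
proof (cases "S = {}")
  case False
  then obtain x where "x \<in> S"
    by auto
  then have "ereal (d x x) \<le> mdiam d S"
    using mdiam_ge_dist by metis
  moreover have "0 \<le> ereal (d x x)"
    by simp
  ultimately show ?thesis
    by (rule order_trans[rotated])
qed (simp add: mdiam_def)

lemma triangle3:
  "\<lbrakk>x \<in> M; y \<in> M; z \<in> M; w \<in> M\<rbrakk> \<Longrightarrow> d x w \<le> d x y + d y z + d z w"
  using triangle[of x y w] triangle[of y z w] by simp

lemma nbhd_memI:
  assumes "x \<in> M" and "z \<in> Y" and "d x z \<le> e"
  shows "x \<in> nbhd M d Y e"
proof -
  have "Inf (d x ` Y) \<le> d x z"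
    using assms(2) by (intro cInf_lower) (auto intro: bdd_belowI[where m = 0])
  then show ?thesis
    using assms unfolding nbhd_def by auto
qed

lemma nbhd_obtain_close:
  assumes "x \<in> nbhd M d Y e" and "e < e'"
  obtains z where "z \<in> Y" and "d x z < e'"
proof -
  have "Y \<noteq> {}" and "Inf (d x ` Y) < e'"
    using assms unfolding nbhd_def by auto
  moreover have "bdd_below (d x ` Y)"
    by (auto intro: bdd_belowI[where m = 0])
  ultimately show ?thesis
    using that cInf_less_iff[of "d x ` Y" e'] by auto
qed

end

locale path_system = Metric_space M d
  for M :: "'a set" and d and \<Gamma> :: "'a rpath set" and \<mu> \<nu> :: real +
  assumes path_system_space: "path_system_space M d \<Gamma> \<mu> \<nu>"
begin

lemma obtain_joining_path:
  assumes "x \<in> M" and "y \<in> M"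
  obtains s t \<alpha> where "(s, t, \<alpha>) \<in> \<Gamma>" and "\<alpha> s = x" and "\<alpha> t = y"
proof -
  obtain \<gamma> where "\<gamma> \<in> \<Gamma>" and "joins \<gamma> x y"
    using assms path_system_space unfolding path_system_space_def by blast
  then show ?thesis
    using that by (cases \<gamma>) (auto simp: joins_def)
qed

lemma path_in_space:
  assumes "(s, t, \<alpha>) \<in> \<Gamma>" and "r \<in> {s..t}"
  shows "\<alpha> r \<in> M"
proof -
  have "is_path M d (s, t, \<alpha>)"
    using assms(1) path_system_space unfolding path_system_space_def by blast
  then show ?thesis
    using assms(2) unfolding is_path_def by auto
qed

lemma dist_start_path_point_le:
  assumes "(s, t, \<alpha>) \<in> \<Gamma>" and r: "r \<in> {s..t}"
  shows "d (\<alpha> s) (\<alpha> r) \<le> \<bar>\<mu>\<bar> * d (\<alpha> s) (\<alpha> t) + \<bar>\<nu>\<bar>"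
proof -
  have "quasi_geodesic d \<mu> \<nu> (s, t, \<alpha>)"
    using assms(1) path_system_space unfolding path_system_space_def by blast
  then have qg: "d (\<alpha> t1) (\<alpha> t2) \<le> \<bar>t1 - t2\<bar> \<and> \<bar>t1 - t2\<bar> \<le> \<mu> * d (\<alpha> t1) (\<alpha> t2) + \<nu>"
    if "t1 \<in> {s..t}" and "t2 \<in> {s..t}" for t1 t2
    using that unfolding quasi_geodesic_def by simp
  have st: "s \<in> {s..t}" "t \<in> {s..t}"
    using r by auto
  have "d (\<alpha> s) (\<alpha> r) \<le> \<bar>s - r\<bar>"
    using qg[OF st(1) r] by simp
  also have "\<dots> \<le> \<bar>s - t\<bar>"
    using r by auto
  also have "\<dots> \<le> \<mu> * d (\<alpha> s) (\<alpha> t) + \<nu>"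
    using qg[OF st] by simp
  also have "\<dots> \<le> \<bar>\<mu>\<bar> * d (\<alpha> s) (\<alpha> t) + \<bar>\<nu>\<bar>"
    by (intro add_mono mult_right_mono) auto
  finally show ?thesis .
qed

end

locale constricting_map = path_system +
  fixes \<delta> :: real and A :: "'a set" and \<pi> :: "'a \<Rightarrow> 'a"
  assumes constricting: "constricting M d \<Gamma> \<delta> A \<pi>" and constant_nonneg: "0 \<le> \<delta>"
begin

lemma target_subset: "A \<subseteq> M"
  and proj_mem: "x \<in> M \<Longrightarrow> \<pi> x \<in> A"
  and dist_proj_target_le: "a \<in> A \<Longrightarrow> d a (\<pi> a) \<le> \<delta>"
  using constricting unfolding constricting_def by auto

lemma proj_in_space: "x \<in> M \<Longrightarrow> \<pi> x \<in> M"
  using proj_mem target_subset by auto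

lemma path_meets_proj_ball:
  assumes "x \<in> M" and "y \<in> M" and "(s, t, \<alpha>) \<in> \<Gamma>" and "\<alpha> s = x" and "\<alpha> t = y"
    and "d (\<pi> x) (\<pi> y) > \<delta>"
  obtains r where "r \<in> {s..t}" and "d (\<alpha> r) (\<pi> x) \<le> \<delta>"
proof -
  have "joins (s, t, \<alpha>) x y"
    using assms by (simp add: joins_def)
  then have "meets_ball d (s, t, \<alpha>) (\<pi> x) \<delta>"
    using assms constricting unfolding constricting_def by blast
  then show ?thesis
    using that unfolding meets_ball_def by auto
qed

lemma dist_proj_le:
  assumes y: "y \<in> M" and a: "a \<in> A"
  shows "d y (\<pi> y) \<le> (\<bar>\<mu>\<bar> + 1) * d y a + \<bar>\<nu>\<bar> + 2 * \<delta>"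
proof -
  have aM: "a \<in> M"
    using a target_subset by auto
  have "d y (\<pi> y) \<le> \<bar>\<mu>\<bar> * d y a + \<bar>\<nu>\<bar> + 2 * \<delta> + d y a"
  proof (cases "d (\<pi> y) (\<pi> a) > \<delta>")
    case True
    obtain s t \<alpha> where \<gamma>: "(s, t, \<alpha>) \<in> \<Gamma>" "\<alpha> s = y" "\<alpha> t = a"
      using obtain_joining_path[OF y aM] .
    obtain r where r: "r \<in> {s..t}" "d (\<alpha> r) (\<pi> y) \<le> \<delta>"
      using path_meets_proj_ball[OF y aM \<gamma> True] .
    have "d y (\<pi> y) \<le> d y (\<alpha> r) + d (\<alpha> r) (\<pi> y)"
      using triangle[OF y path_in_space[OF \<gamma>(1) r(1)] proj_in_space[OF y]] .
    moreover have "d y (\<alpha> r) \<le> \<bar>\<mu>\<bar> * d y a + \<bar>\<nu>\<bar>"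
      using dist_start_path_point_le[OF \<gamma>(1) r(1)] \<gamma> by simp
    ultimately show ?thesis
      using r(2) constant_nonneg nonneg[of y a] by linarith
  next
    case False
    have "d y (\<pi> y) \<le> d y a + d a (\<pi> a) + d (\<pi> a) (\<pi> y)"
      using triangle3[OF y aM proj_in_space[OF aM] proj_in_space[OF y]] .
    moreover have "0 \<le> \<bar>\<mu>\<bar> * d y a"
      by simp
    ultimately show ?thesis
      using False dist_proj_target_le[OF a] commute[of "\<pi> a" "\<pi> y"] by linarith
  qed
  then show ?thesis
    by (simp add: distrib_right)
qed

text \<open>The slack 1 in \<delta> + \<eta> + 1 pays for choosing a point of Y whose distance to a given
  point of the \<eta>-neighbourhood of Y comes close to the infimum.\<close>

lemma proj_near_quasi_convex:
  assumes Q: "quasi_convex M d \<Gamma> \<eta> Y" and x: "x \<in> Y" and y: "y \<in> Y"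
    and far: "d (\<pi> x) (\<pi> y) > \<delta>"
  obtains y' where "y' \<in> Y" and "d y' (\<pi> x) \<le> \<delta> + \<eta> + 1"
proof -
  have xM: "x \<in> M" and yM: "y \<in> M"
    using Q x y unfolding quasi_convex_def by auto
  obtain s t \<alpha> where \<gamma>: "(s, t, \<alpha>) \<in> \<Gamma>" "\<alpha> s = x" "\<alpha> t = y"
    using obtain_joining_path[OF xM yM] .
  obtain r where r: "r \<in> {s..t}" "d (\<alpha> r) (\<pi> x) \<le> \<delta>"
    using path_meets_proj_ball[OF xM yM \<gamma> far] .
  have "joins (s, t, \<alpha>) x y"
    using \<gamma> by (simp add: joins_def)
  then have "\<alpha> ` {s..t} \<subseteq> nbhd M d Y \<eta>"
    using Q \<gamma>(1) x y unfolding quasi_convex_def by fastforce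
  then have "\<alpha> r \<in> nbhd M d Y \<eta>"
    using r(1) by blast
  then obtain y' where y': "y' \<in> Y" "d (\<alpha> r) y' < \<eta> + 1"
    using nbhd_obtain_close[of "\<alpha> r" Y \<eta> "\<eta> + 1"] by auto
  have "y' \<in> M"
    using Q y'(1) unfolding quasi_convex_def by auto
  then have "d y' (\<pi> x) \<le> d y' (\<alpha> r) + d (\<alpha> r) (\<pi> x)"
    using triangle path_in_space[OF \<gamma>(1) r(1)] proj_in_space[OF xM] by simp
  then show ?thesis
    using that[OF y'(1)] y'(2) r(2) commute[of y' "\<alpha> r"] by linarith
qed

lemma mdiam_proj_le:
  assumes Q: "quasi_convex M d \<Gamma> \<eta> Y" and "0 \<le> \<eta>" and "0 \<le> e1" and "0 \<le> e2"
  defines "\<theta> \<equiv> \<delta> + \<eta> + 1"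
  shows "mdiam d (\<pi> ` Y) \<le> mdiam d (nbhd M d A (\<theta> + e1) \<inter> nbhd M d Y e2) + ereal (2 * \<theta> + \<delta>)"
proof (rule mdiam_le)
  let ?I = "nbhd M d A (\<theta> + e1) \<inter> nbhd M d Y e2"
  have YM: "Y \<subseteq> M"
    using Q unfolding quasi_convex_def by auto
  have in_I: "y' \<in> ?I" if "y' \<in> Y" "x \<in> Y" "d y' (\<pi> x) \<le> \<theta>" for y' x
  proof -
    have "y' \<in> M" and "\<pi> x \<in> A"
      using that YM proj_mem by auto
    then show ?thesis
      using that \<open>0 \<le> e1\<close> \<open>0 \<le> e2\<close> by (auto intro!: nbhd_memI)
  qed
  fix p q
  assume "p \<in> \<pi> ` Y" "q \<in> \<pi> ` Y"
  then obtain x y where x: "x \<in> Y" "p = \<pi> x" and y: "y \<in> Y" "q = \<pi> y"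
    by auto
  show "ereal (d p q) \<le> mdiam d ?I + ereal (2 * \<theta> + \<delta>)"
  proof (cases "d p q > \<delta>")
    case True
    obtain x' where x': "x' \<in> Y" "d x' p \<le> \<theta>"
      using proj_near_quasi_convex[OF Q x(1) y(1)] True x y unfolding \<theta>_def by blast
    obtain y' where y': "y' \<in> Y" "d y' q \<le> \<theta>"
      using proj_near_quasi_convex[OF Q y(1) x(1)] True x y commute[of p q] unfolding \<theta>_def by auto
    have "x \<in> M" "y \<in> M" "x' \<in> M" "y' \<in> M"
      using x y x' y' YM by auto
    then have "d p q \<le> d p x' + d x' y' + d y' q"
      unfolding x(2) y(2) by (intro triangle3 proj_in_space)
    then have "d p q \<le> d x' y' + (2 * \<theta> + \<delta>)"
      using x' y' commute[of p x'] constant_nonneg by linarith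
    then have "ereal (d p q) \<le> ereal (d x' y') + ereal (2 * \<theta> + \<delta>)"
      by simp
    also have "\<dots> \<le> mdiam d ?I + ereal (2 * \<theta> + \<delta>)"
    proof (rule add_right_mono, rule mdiam_ge_dist)
      show "x' \<in> ?I" and "y' \<in> ?I"
        using in_I x x' y y' by auto
    qed
    finally show ?thesis .
  next
    case False
    then have "ereal (d p q) \<le> 0 + ereal (2 * \<theta> + \<delta>)"
      using \<open>0 \<le> \<eta>\<close> constant_nonneg unfolding \<theta>_def by simp
    also have "\<dots> \<le> mdiam d ?I + ereal (2 * \<theta> + \<delta>)"
      using mdiam_nonneg by (rule add_right_mono)
    finally show ?thesis .
  qed
next
  show "0 \<le> mdiam d (nbhd M d A (\<theta> + e1) \<inter> nbhd M d Y e2) + ereal (2 * \<theta> + \<delta>)"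
    using mdiam_nonneg \<open>0 \<le> \<eta>\<close> constant_nonneg unfolding \<theta>_def by simp
qed

lemma dist_nbhd_inter_proj_le:
  assumes YM: "Y \<subseteq> M" and u: "u \<in> nbhd M d A \<theta> \<inter> nbhd M d Y e"
  obtains w where "w \<in> Y" and "d u w \<le> e + 1"
    and "d w (\<pi> w) \<le> (\<bar>\<mu>\<bar> + 1) * (e + \<theta> + 2) + \<bar>\<nu>\<bar> + 2 * \<delta>"
proof -
  have uM: "u \<in> M"
    using u unfolding nbhd_def by auto
  obtain w where w: "w \<in> Y" "d u w < e + 1"
    using u nbhd_obtain_close[of u Y e "e + 1"] by auto
  obtain a where a: "a \<in> A" "d u a < \<theta> + 1"
    using u nbhd_obtain_close[of u A \<theta> "\<theta> + 1"] by auto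
  have wM: "w \<in> M" and aM: "a \<in> M"
    using w a YM target_subset by auto
  have "d w a \<le> d w u + d u a"
    using triangle[OF wM uM aM] .
  then have "d w a \<le> e + \<theta> + 2"
    using w a commute[of w u] by linarith
  then have "(\<bar>\<mu>\<bar> + 1) * d w a \<le> (\<bar>\<mu>\<bar> + 1) * (e + \<theta> + 2)"
    by (simp add: mult_left_mono)
  then have "d w (\<pi> w) \<le> (\<bar>\<mu>\<bar> + 1) * (e + \<theta> + 2) + \<bar>\<nu>\<bar> + 2 * \<delta>"
    using dist_proj_le[OF wM a(1)] by linarith
  then show ?thesis
    using that w by fastforce
qed

lemma mdiam_nbhd_inter_le:
  assumes YM: "Y \<subseteq> M" and "0 \<le> \<theta>" and "0 \<le> e"
  defines "k \<equiv> (\<bar>\<mu>\<bar> + 1) * (e + \<theta> + 2) + \<bar>\<nu>\<bar> + 2 * \<delta>"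
  shows "mdiam d (nbhd M d A \<theta> \<inter> nbhd M d Y e) \<le> mdiam d (\<pi> ` Y) + ereal (2 * (e + 1 + k))"
proof (rule mdiam_le)
  fix u v
  assume u: "u \<in> nbhd M d A \<theta> \<inter> nbhd M d Y e" and v: "v \<in> nbhd M d A \<theta> \<inter> nbhd M d Y e"
  obtain wu where wu: "wu \<in> Y" "d u wu \<le> e + 1" "d wu (\<pi> wu) \<le> k"
    using dist_nbhd_inter_proj_le[OF YM u] unfolding k_def .
  obtain wv where wv: "wv \<in> Y" "d v wv \<le> e + 1" "d wv (\<pi> wv) \<le> k"
    using dist_nbhd_inter_proj_le[OF YM v] unfolding k_def .
  have uM: "u \<in> M" and vM: "v \<in> M"
    using u v unfolding nbhd_def by auto
  have wM: "wu \<in> M" "wv \<in> M"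
    using wu(1) wv(1) YM by auto
  have "d u v \<le> d u wu + d wu (\<pi> wu) + d (\<pi> wu) v"
    using triangle3[OF uM wM(1) proj_in_space[OF wM(1)] vM] .
  moreover have "d (\<pi> wu) v \<le> d (\<pi> wu) (\<pi> wv) + d (\<pi> wv) wv + d wv v"
    using triangle3[OF proj_in_space[OF wM(1)] proj_in_space[OF wM(2)] wM(2) vM] .
  ultimately have "d u v \<le> d (\<pi> wu) (\<pi> wv) + 2 * (e + 1 + k)"
    using wu wv commute[of v wv] commute[of "\<pi> wv" wv] by (smt (verit))
  then have "ereal (d u v) \<le> ereal (d (\<pi> wu) (\<pi> wv)) + ereal (2 * (e + 1 + k))"
    by simp
  also have "\<dots> \<le> mdiam d (\<pi> ` Y) + ereal (2 * (e + 1 + k))"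
    using wu(1) wv(1) by (intro add_right_mono mdiam_ge_dist) auto
  finally show "ereal (d u v) \<le> mdiam d (\<pi> ` Y) + ereal (2 * (e + 1 + k))" .
next
  have "0 \<le> k"
    unfolding k_def using assms constant_nonneg by simp
  then show "0 \<le> mdiam d (\<pi> ` Y) + ereal (2 * (e + 1 + k))"
    using mdiam_nonneg \<open>0 \<le> e\<close> by simp
qed
end

definition comparison_error :: "real \<Rightarrow> real \<Rightarrow> real \<Rightarrow> real \<Rightarrow> real \<Rightarrow> real \<Rightarrow> real" where
  "comparison_error \<mu> \<nu> \<delta> \<eta> e1 e2 = 2 * (\<delta> + \<eta> + 1) + \<delta>
     + 2 * (e2 + 1 + ((\<bar>\<mu>\<bar> + 1) * (e2 + (\<delta> + \<eta> + 1 + e1) + 2) + \<bar>\<nu>\<bar> + 2 * \<delta>))"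

lemma comparison_error_nonneg:
  "\<lbrakk>0 \<le> \<delta>; 0 \<le> \<eta>; 0 \<le> e1; 0 \<le> e2\<rbrakk> \<Longrightarrow> 0 \<le> comparison_error \<mu> \<nu> \<delta> \<eta> e1 e2"
  unfolding comparison_error_def by simp

lemma mdiam_proj_comparison:
  assumes P: "path_system_space M d \<Gamma> \<mu> \<nu>" and C: "constricting M d \<Gamma> \<delta> A \<pi>" and "0 \<le> \<delta>"
    and Q: "quasi_convex M d \<Gamma> \<eta> Y" and "0 \<le> \<eta>" and "0 \<le> e1" and "0 \<le> e2"
  shows "mdiam d (\<pi> ` Y) \<le> mdiam d (nbhd M d A (\<delta> + \<eta> + 1 + e1) \<inter> nbhd M d Y e2)
           + ereal (comparison_error \<mu> \<nu> \<delta> \<eta> e1 e2)"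
    and "mdiam d (nbhd M d A (\<delta> + \<eta> + 1 + e1) \<inter> nbhd M d Y e2)
           \<le> mdiam d (\<pi> ` Y) + ereal (comparison_error \<mu> \<nu> \<delta> \<eta> e1 e2)"
proof -
  interpret constricting_map M d \<Gamma> \<mu> \<nu> \<delta> A \<pi>
    using P C \<open>0 \<le> \<delta>\<close> unfolding constricting_map_def constricting_map_axioms_def path_system_def
      path_system_axioms_def path_system_space_def geodesic_space_def by blast
  define I where "I = nbhd M d A (\<delta> + \<eta> + 1 + e1) \<inter> nbhd M d Y e2"
  define k where "k = (\<bar>\<mu>\<bar> + 1) * (e2 + (\<delta> + \<eta> + 1 + e1) + 2) + \<bar>\<nu>\<bar> + 2 * \<delta>"
  have k: "0 \<le> k"
    unfolding k_def using assms by simp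
  have "mdiam d (\<pi> ` Y) \<le> mdiam d I + ereal (2 * (\<delta> + \<eta> + 1) + \<delta>)"
    using mdiam_proj_le[OF Q \<open>0 \<le> \<eta>\<close> \<open>0 \<le> e1\<close> \<open>0 \<le> e2\<close>] unfolding I_def .
  also have "\<dots> \<le> mdiam d I + ereal (comparison_error \<mu> \<nu> \<delta> \<eta> e1 e2)"
    unfolding comparison_error_def k_def[symmetric] using k \<open>0 \<le> e2\<close> by (intro add_left_mono) simp
  finally show "mdiam d (\<pi> ` Y) \<le> mdiam d (nbhd M d A (\<delta> + \<eta> + 1 + e1) \<inter> nbhd M d Y e2)
      + ereal (comparison_error \<mu> \<nu> \<delta> \<eta> e1 e2)"
    unfolding I_def .
  have "Y \<subseteq> M"
    using Q unfolding quasi_convex_def by simp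
  then have "mdiam d I \<le> mdiam d (\<pi> ` Y) + ereal (2 * (e2 + 1 + k))"
    using mdiam_nbhd_inter_le[of Y "\<delta> + \<eta> + 1 + e1" e2] assms
    unfolding I_def k_def by (simp add: add.commute)
  also have "\<dots> \<le> mdiam d (\<pi> ` Y) + ereal (comparison_error \<mu> \<nu> \<delta> \<eta> e1 e2)"
    unfolding comparison_error_def k_def[symmetric] using \<open>0 \<le> \<eta>\<close> \<open>0 \<le> \<delta>\<close>
    by (intro add_left_mono) simp
  finally show "mdiam d (nbhd M d A (\<delta> + \<eta> + 1 + e1) \<inter> nbhd M d Y e2)
      \<le> mdiam d (\<pi> ` Y) + ereal (comparison_error \<mu> \<nu> \<delta> \<eta> e1 e2)"
    unfolding I_def .
qed

theorem mainTheorem10: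
  fixes M :: "'a set" and d :: "'a \<Rightarrow> 'a \<Rightarrow> real" and \<Gamma> :: "'a rpath set"
    and \<mu> \<nu> :: real
  assumes "path_system_space M d \<Gamma> \<mu> \<nu>"
  shows "\<forall>\<delta>\<ge>0. \<forall>\<eta>\<ge>0. \<exists>\<theta>\<ge>0. \<exists>\<zeta> :: real \<Rightarrow> real \<Rightarrow> real.
           (\<forall>e1\<ge>0. \<forall>e2\<ge>0. \<zeta> e1 e2 \<ge> 0) \<and>
           (\<forall>A \<pi> Y. constricting M d \<Gamma> \<delta> A \<pi> \<longrightarrow> quasi_convex M d \<Gamma> \<eta> Y \<longrightarrow>
              (\<forall>e1\<ge>0. \<forall>e2\<ge>0.
                 mdiam d (\<pi> ` Y) \<le> mdiam d (nbhd M d A (\<theta> + e1) \<inter> nbhd M d Y e2) + ereal (\<zeta> e1 e2)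
               \<and> mdiam d (nbhd M d A (\<theta> + e1) \<inter> nbhd M d Y e2) \<le> mdiam d (\<pi> ` Y) + ereal (\<zeta> e1 e2)))"
proof (intro allI impI, goal_cases)
  case (1 \<delta> \<eta>)
  show ?case
    using mdiam_proj_comparison[OF assms _ 1(1) _ 1(2)] comparison_error_nonneg 1
    by (intro exI[of _ "\<delta> + \<eta> + 1"] exI[of _ "comparison_error \<mu> \<nu> \<delta> \<eta>"] conjI allI impI) auto
qed

end
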